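(* Let $\mathcal T\subseteq 2^X$ be closed under taking supersets. Then $DM_{\mathcal T}(X)$ has finite rank over $\mathbb{Z}$ if and only if $\mathcal T$ contains all the cocircuits of $X$; and $D_{\mathcal T}(X)$ has finite dimension over $\mathbb{R}$ if and only if $\mathcal T$ contains all the cocircuits of $X$.
   Context: $\Gamma\cong\mathbb{Z}^d$ is a lattice, $V=\Gamma\otimes\mathbb{R}$, $X$ a finite list of nonzero elements of $\Gamma$ spanning $V$. A cocircuit is the sublist of elements of $X$ not lying in a hyperplane of $V$ spanned by elements of $X$. $\mathcal C[\Gamma]$ is the set of $\mathbb{Z}$-valued functions on $\Gamma$; $\nabla_af(x)=f(x)-f(x-a)$ and $\nabla_A=\prod_{a\in A}\nabla_a$. $DM_{\mathcal T}(X)=\{f\in\mathcal C[\Gamma]:\nabla_Af=0\ \forall A\in\mathcal T\}$; $D_{\mathcal T}(X)=\{f:V\to\mathbb{R}\text{ smooth}:\partial_Af=0\ \forall A\in\mathcal T\}$ with $\partial_A=\prod_{a\in A}\partial_a$ the product of directional derivatives. *)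

theory Defs
  imports "HOL-Analysis.Analysis"
begin

text \<open>The lattice \<Gamma> = \<int>^d is modelled as int^'d, V = \<Gamma> \<otimes> \<real> as real^'d.
  The list X is a list of lattice vectors; sublists of X are index sets
  A \<subseteq> {..<length X}.\<close>

definition to_real :: "int ^ 'd \<Rightarrow> real ^ 'd" where
  "to_real v = (\<chi> j. of_int (v $ j))"

definition spanned_hyperplane :: "(int ^ 'd) list \<Rightarrow> (real ^ 'd) set \<Rightarrow> bool" where
  "spanned_hyperplane X H \<longleftrightarrow>
     (\<exists>S \<subseteq> to_real ` set X. H = span S) \<and> dim H = CARD('d) - 1"

definition cocircuits :: "(int ^ 'd) list \<Rightarrow> nat set set" where
  "cocircuits X = {{i. i < length X \<and> to_real (X ! i) \<notin> H} | H. spanned_hyperplane X H}"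

definition nabla :: "int ^ 'd \<Rightarrow> (int ^ 'd \<Rightarrow> int) \<Rightarrow> (int ^ 'd \<Rightarrow> int)" where
  "nabla a f = (\<lambda>x. f x - f (x - a))"

definition nabla_set :: "(int ^ 'd) list \<Rightarrow> nat set \<Rightarrow> (int ^ 'd \<Rightarrow> int) \<Rightarrow> (int ^ 'd \<Rightarrow> int)" where
  "nabla_set X A f = foldr (\<lambda>i g. nabla (X ! i) g) (sorted_list_of_set A) f"

definition DM :: "(int ^ 'd) list \<Rightarrow> nat set set \<Rightarrow> (int ^ 'd \<Rightarrow> int) set" where
  "DM X T = {f. \<forall>A\<in>T. nabla_set X A f = (\<lambda>_. 0)}"

definition dderiv :: "real ^ 'd \<Rightarrow> (real ^ 'd \<Rightarrow> real) \<Rightarrow> (real ^ 'd \<Rightarrow> real)" where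
  "dderiv a f = (\<lambda>x. frechet_derivative f (at x) a)"

primrec dderivs :: "(real ^ 'd) list \<Rightarrow> (real ^ 'd \<Rightarrow> real) \<Rightarrow> (real ^ 'd \<Rightarrow> real)" where
  "dderivs [] f = f"
| "dderivs (a # as) f = dderiv a (dderivs as f)"

definition smooth :: "(real ^ 'd \<Rightarrow> real) \<Rightarrow> bool" where
  "smooth f \<longleftrightarrow> (\<forall>as x. dderivs as f differentiable (at x))"

definition partial_set :: "(int ^ 'd) list \<Rightarrow> nat set \<Rightarrow> (real ^ 'd \<Rightarrow> real) \<Rightarrow> (real ^ 'd \<Rightarrow> real)" where
  "partial_set X A f = dderivs (map (\<lambda>i. to_real (X ! i)) (sorted_list_of_set A)) f"

definition Dsp :: "(int ^ 'd) list \<Rightarrow> nat set set \<Rightarrow> (real ^ 'd \<Rightarrow> real) set" where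
  "Dsp X T = {f. smooth f \<and> (\<forall>A\<in>T. partial_set X A f = (\<lambda>_. 0))}"

definition lin_indep_fun :: "('a \<Rightarrow> 'b::comm_ring) list \<Rightarrow> bool" where
  "lin_indep_fun fs \<longleftrightarrow>
     (\<forall>c :: nat \<Rightarrow> 'b. (\<forall>x. (\<Sum>i<length fs. c i * (fs ! i) x) = 0) \<longrightarrow> (\<forall>i<length fs. c i = 0))"

definition finite_rank :: "('a \<Rightarrow> 'b::comm_ring) set \<Rightarrow> bool" where
  "finite_rank M \<longleftrightarrow> (\<exists>n. \<forall>fs. set fs \<subseteq> M \<and> lin_indep_fun fs \<longrightarrow> length fs \<le> n)"

end

theory Submission
  imports Defs "HOL-Computational_Algebra.Polynomial"
begin

text \<open>Both spaces consist of functions annihilated by the operators \<open>\<nabla>\<^sub>A\<close> resp. \<open>\<partial>\<^sub>A\<close>, \<open>A \<in> T\<close>,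
  and these commute. If \<open>T\<close> contains every cocircuit, then every set meeting all bases of \<open>X\<close>
  contains a cocircuit and hence lies in \<open>T\<close>; composing one operator per basis therefore shows that,
  for each coordinate axis \<open>e\<^sub>k\<close>, a fixed power of \<open>\<nabla>\<^bsub>M e\<^sub>k\<^esub>\<close> (resp. \<open>\<partial>\<^bsub>e\<^sub>k\<^esub>\<close>) kills the whole space.
  Such a function is determined by its values on a finite box (resp. by finitely many derivatives at
  the origin), which bounds the rank. Conversely, if a cocircuit \<open>C = X \<setminus> H\<close> is missing from \<open>T\<close>,
  every \<open>A \<in> T\<close> meets the hyperplane \<open>H = n\<^sup>\<perp>\<close>, so every function of \<open>n \<bullet> x\<close> alone is killed by
  some factor of \<open>\<nabla>\<^sub>A\<close> (resp. \<open>\<partial>\<^sub>A\<close>); indicators of the level sets of \<open>n \<bullet> x\<close> (resp. the powers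
  \<open>(n \<bullet> x)\<^sup>k\<close>) give arbitrarily large independent families.\<close>

section \<open>Finite rank\<close>

lemma exists_nontrivial_relation_on_finite_set:
  fixes F :: "'i \<Rightarrow> 'a \<Rightarrow> 'b::idom"
  assumes "finite S" "finite I" "card S < card I"
  shows "\<exists>c. (\<exists>i\<in>I. c i \<noteq> 0) \<and> (\<forall>x\<in>S. (\<Sum>i\<in>I. c i * F i x) = 0)"
  using assms
proof (induction S arbitrary: I F rule: finite_induct)
  case empty
  then obtain i where "i \<in> I" by fastforce
  then show ?case by (intro exI[of _ "\<lambda>_. 1"]) auto
next
  case (insert s S)
  show ?case
  proof (cases "\<forall>i\<in>I. F i s = 0")
    case True
    have "card S < card I" using insert by auto
    then obtain c where "\<exists>i\<in>I. c i \<noteq> 0" "\<forall>x\<in>S. (\<Sum>i\<in>I. c i * F i x) = 0"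
      using insert.IH[OF insert.prems(1)] by blast
    with True show ?thesis by (intro exI[of _ c]) auto
  next
    case False
    then obtain j where j: "j \<in> I" "F j s \<noteq> 0" by blast
    define I' where "I' = I - {j}"
    \<comment> \<open>Gaussian elimination: the functions \<open>G i\<close> vanish at \<open>s\<close>.\<close>
    define G where "G = (\<lambda>i x. F j s * F i x - F i s * F j x)"
    have I': "I = insert j I'" "j \<notin> I'" "finite I'" "card S < card I'"
      using j insert unfolding I'_def by auto
    obtain d where d: "\<exists>i\<in>I'. d i \<noteq> 0" "\<forall>x\<in>S. (\<Sum>i\<in>I'. d i * G i x) = 0"
      using insert.IH[OF I'(3,4), of G] by blast
    define c where "c = (\<lambda>i. if i = j then - (\<Sum>i'\<in>I'. d i' * F i' s) else d i * F j s)"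
    have combination: "(\<Sum>i\<in>I. c i * F i x) = (\<Sum>i\<in>I'. d i * G i x)" for x
    proof -
      have "(\<Sum>i\<in>I. c i * F i x) = c j * F j x + (\<Sum>i\<in>I'. c i * F i x)"
        using I' by simp
      also have "(\<Sum>i\<in>I'. c i * F i x) = (\<Sum>i\<in>I'. d i * F j s * F i x)"
        using I' by (intro sum.cong) (auto simp: c_def)
      also have "c j * F j x = - (\<Sum>i\<in>I'. d i * F i s * F j x)"
        by (simp add: c_def sum_distrib_right)
      finally have "(\<Sum>i\<in>I. c i * F i x)
          = (\<Sum>i\<in>I'. d i * F j s * F i x) - (\<Sum>i\<in>I'. d i * F i s * F j x)"
        by simp
      also have "\<dots> = (\<Sum>i\<in>I'. d i * F j s * F i x - d i * F i s * F j x)"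
        by (simp add: sum_subtractf)
      finally show ?thesis by (simp add: G_def algebra_simps)
    qed
    have "\<forall>x\<in>insert s S. (\<Sum>i\<in>I. c i * F i x) = 0"
      using d(2) combination by (auto simp: G_def)
    moreover have "\<exists>i\<in>I. c i \<noteq> 0"
      using d(1) j I' by (auto simp: c_def)
    ultimately show ?thesis by blast
  qed
qed

lemma finite_rankI:
  fixes M :: "('a \<Rightarrow> 'b::idom) set" and observe :: "('a \<Rightarrow> 'b) \<Rightarrow> 's \<Rightarrow> 'b"
  assumes "finite S"
    and determined: "\<And>fs c. set fs \<subseteq> M \<Longrightarrow> \<forall>s\<in>S. (\<Sum>i<length fs. c i * observe (fs!i) s) = 0
               \<Longrightarrow> \<forall>x. (\<Sum>i<length fs. c i * (fs!i) x) = 0"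
  shows "finite_rank M"
  unfolding finite_rank_def
proof (intro exI allI impI)
  fix fs assume fs: "set fs \<subseteq> M \<and> lin_indep_fun fs"
  show "length fs \<le> card S"
  proof (rule ccontr)
    assume "\<not> length fs \<le> card S"
    then have "card S < card {..<length fs}" by simp
    from exists_nontrivial_relation_on_finite_set[OF \<open>finite S\<close> _ this, of "\<lambda>i. observe (fs!i)"]
    obtain c where c: "\<exists>i<length fs. c i \<noteq> 0"
      "\<forall>s\<in>S. (\<Sum>i<length fs. c i * observe (fs!i) s) = 0"
      by auto
    from determined[OF _ c(2)] fs have "\<forall>i<length fs. c i = 0"
      unfolding lin_indep_fun_def by blast
    with c(1) show False by blast
  qed
qed

lemma not_finite_rankI:
  assumes "\<And>n. \<exists>fs. set fs \<subseteq> M \<and> lin_indep_fun fs \<and> length fs = n"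
  shows "\<not> finite_rank M"
proof
  assume "finite_rank M"
  then obtain n where "\<forall>fs. set fs \<subseteq> M \<and> lin_indep_fun fs \<longrightarrow> length fs \<le> n"
    unfolding finite_rank_def by blast
  with assms[of "Suc n"] show False by fastforce
qed

section \<open>Bases, cocircuits and transversals\<close>

definition basis_indices :: "(int ^ 'd) list \<Rightarrow> nat set \<Rightarrow> bool" where
  "basis_indices X B \<longleftrightarrow> B \<subseteq> {..<length X} \<and> inj_on (\<lambda>i. to_real (X!i)) B
     \<and> independent ((\<lambda>i. to_real (X!i)) ` B) \<and> span ((\<lambda>i. to_real (X!i)) ` B) = UNIV"

lemma finite_basis_indices: "finite {B. basis_indices X B}"
  by (rule finite_subset[of _ "Pow {..<length X}"]) (auto simp: basis_indices_def)

lemma basis_indices_finite: "basis_indices X B \<Longrightarrow> finite B"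
  unfolding basis_indices_def by (meson finite_lessThan finite_subset)

lemma card_basis_indices:
  fixes X :: "(int ^ 'd) list"
  assumes "basis_indices X B"
  shows "card B = CARD('d)"
proof -
  have "card ((\<lambda>i. to_real (X!i)) ` B) = dim (UNIV :: (real^'d) set)"
    using assms unfolding basis_indices_def by (intro basis_card_eq_dim) auto
  with assms show ?thesis by (simp add: basis_indices_def card_image)
qed

lemma basis_indices_in_spanning_subset:
  fixes X :: "(int ^ 'd) list"
  assumes R: "R \<subseteq> {..<length X}" and spanning: "span ((\<lambda>i. to_real (X!i)) ` R) = UNIV"
  obtains B where "B \<subseteq> R" "basis_indices X B"
proof -
  let ?v = "\<lambda>i. to_real (X!i)"
  obtain W where W: "W \<subseteq> ?v ` R" "independent W" "?v ` R \<subseteq> span W"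
    using maximal_independent_subset[of "?v ` R"] by blast
  obtain B where B: "B \<subseteq> R" "?v ` B = W" "inj_on ?v B"
    using subset_image_inj[THEN iffD1, OF W(1)] by blast
  have "span W = UNIV"
    using spanning span_mono[OF W(3)] by (simp add: span_span top.extremum_unique)
  with B W(2) R have "basis_indices X B" by (auto simp: basis_indices_def)
  with B(1) show thesis by (rule that)
qed

lemma spanned_hyperplane_containing:
  fixes X :: "(int ^ 'd) list"
  assumes spans: "span (to_real ` set X) = UNIV"
    and W: "W \<subseteq> to_real ` set X" "span W \<noteq> UNIV"
  obtains H where "spanned_hyperplane X H" "W \<subseteq> H"
proof -
  have "dim W \<noteq> DIM(real^'d)" using W(2) dim_eq_full by blast
  then have dimW: "dim W < CARD('d)" using dim_subset_UNIV[of W] by simp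
  obtain I where I: "I \<subseteq> W" "independent I" "W \<subseteq> span I"
    using maximal_independent_subset[of W] by blast
  obtain J where J: "I \<subseteq> J" "J \<subseteq> to_real ` set X" "independent J" "to_real ` set X \<subseteq> span J"
    using maximal_independent_subset_extend[of I "to_real ` set X"] I W(1) by blast
  have "span J = UNIV"
    using spans span_mono[OF J(4)] by (simp add: span_span top.extremum_unique)
  then have cardJ: "card J = CARD('d)"
    using dim_span_eq_card_independent[OF J(3)] by simp
  have "card I = dim W" using basis_card_eq_dim[OF I(1) I(3) I(2)] .
  then have "I \<noteq> J" using cardJ dimW by auto
  then obtain b where b: "b \<in> J" "b \<notin> I" using J(1) by blast
  define H where "H = span (J - {b})"
  have "independent (J - {b})" using J(3) by (rule independent_mono) auto
  then have "dim H = card (J - {b})" unfolding H_def by (rule dim_span_eq_card_independent)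
  also have "\<dots> = CARD('d) - 1" using cardJ b(1) independent_imp_finite[OF J(3)] by simp
  finally have "dim H = CARD('d) - 1" .
  moreover have "J - {b} \<subseteq> to_real ` set X" using J(2) by blast
  ultimately have "spanned_hyperplane X H"
    unfolding spanned_hyperplane_def H_def by (intro conjI exI[of _ "J - {b}"]) simp_all
  moreover have "span I \<subseteq> H" unfolding H_def using J(1) b(2) by (intro span_mono) blast
  then have "W \<subseteq> H" using I(3) by blast
  ultimately show thesis by (rule that)
qed

lemma cocircuit_subset_if_meets_all_bases:
  fixes X :: "(int ^ 'd) list"
  assumes spans: "span (to_real ` set X) = UNIV"
    and S: "S \<subseteq> {..<length X}" and meets: "\<And>B. basis_indices X B \<Longrightarrow> S \<inter> B \<noteq> {}"
  obtains C where "C \<in> cocircuits X" "C \<subseteq> S"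
proof -
  define R where "R = {..<length X} - S"
  let ?W = "(\<lambda>i. to_real (X!i)) ` R"
  have "?W \<subseteq> to_real ` set X" by (auto simp: R_def)
  moreover have "span ?W \<noteq> UNIV"
  proof
    assume "span ?W = UNIV"
    moreover have "R \<subseteq> {..<length X}" by (simp add: R_def)
    ultimately obtain B where B: "B \<subseteq> R" "basis_indices X B"
      using basis_indices_in_spanning_subset by blast
    with meets[OF B(2)] show False by (auto simp: R_def)
  qed
  ultimately obtain H where H: "spanned_hyperplane X H" "?W \<subseteq> H"
    by (rule spanned_hyperplane_containing[OF spans])
  define C where "C = {i. i < length X \<and> to_real (X ! i) \<notin> H}"
  have "C \<in> cocircuits X" unfolding cocircuits_def C_def using H(1) by blast
  moreover have "C \<subseteq> S"
  proof
    fix i assume i: "i \<in> C"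
    show "i \<in> S"
    proof (rule ccontr)
      assume "i \<notin> S"
      with i have "to_real (X!i) \<in> ?W" by (auto simp: C_def R_def)
      with H(2) i show False by (auto simp: C_def)
    qed
  qed
  ultimately show thesis by (rule that)
qed

fun choices_in :: "nat set set \<Rightarrow> nat set list \<Rightarrow> nat set \<Rightarrow> bool" where
  "choices_in T [] S \<longleftrightarrow> S \<in> T"
| "choices_in T (B # Bs) S \<longleftrightarrow> (\<forall>b\<in>B. choices_in T Bs (insert b S))"

lemma choices_inI:
  assumes "\<forall>B\<in>set Bs. B \<subseteq> N" "S \<subseteq> N"
    and "\<And>S'. S \<subseteq> S' \<Longrightarrow> S' \<subseteq> N \<Longrightarrow> \<forall>B\<in>set Bs. S' \<inter> B \<noteq> {} \<Longrightarrow> S' \<in> T"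
  shows "choices_in T Bs S"
  using assms
proof (induction Bs arbitrary: S)
  case Nil
  then show ?case by simp
next
  case (Cons B Bs)
  have "choices_in T Bs (insert b S)" if "b \<in> B" for b
  proof (rule Cons.IH)
    fix S' assume "insert b S \<subseteq> S'" "S' \<subseteq> N" "\<forall>B\<in>set Bs. S' \<inter> B \<noteq> {}"
    with that show "S' \<in> T" using Cons.prems(3) by auto
  qed (use Cons.prems that in auto)
  then show ?case by simp
qed

lemma choices_in_bases:
  fixes X :: "(int ^ 'd) list"
  assumes spans: "span (to_real ` set X) = UNIV"
    and T_up: "\<forall>A\<in>T. \<forall>B. A \<subseteq> B \<and> B \<subseteq> {..<length X} \<longrightarrow> B \<in> T"
    and coc: "cocircuits X \<subseteq> T"
    and Bs: "set Bs = {B. basis_indices X B}"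
  shows "choices_in T Bs {}"
proof (rule choices_inI[where N = "{..<length X}"])
  fix S assume S: "S \<subseteq> {..<length X}" "\<forall>B\<in>set Bs. S \<inter> B \<noteq> {}"
  obtain C where "C \<in> cocircuits X" "C \<subseteq> S"
    by (rule cocircuit_subset_if_meets_all_bases[OF spans S(1)]) (use S(2) Bs in auto)
  with coc T_up S(1) show "S \<in> T" by blast
qed (use Bs in \<open>auto simp: basis_indices_def\<close>)

section \<open>Commuting operators annihilating a space of functions\<close>

lemma foldr_commute_closed:
  assumes "\<And>c h. h \<in> F \<Longrightarrow> D c h \<in> F"
    and "\<And>c c' h. h \<in> F \<Longrightarrow> D c (D c' h) = D c' (D c h)"
    and "h \<in> F"
  shows "foldr D us (D c h) = D c (foldr D us h)" and "foldr D us h \<in> F"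
  by (induction us) (use assms in auto)

text \<open>Here \<open>D c\<close> stands for \<open>\<nabla>\<^sub>c\<close> or \<open>\<partial>\<^sub>c\<close>, \<open>DA A\<close> for \<open>\<nabla>\<^sub>A\<close> or \<open>\<partial>\<^sub>A\<close>, and \<open>F\<close> for the functions
  on which these operators commute.\<close>
lemma foldr_annihilates_if_choices_in:
  fixes D :: "'c \<Rightarrow> ('x \<Rightarrow> 'y::zero) \<Rightarrow> 'x \<Rightarrow> 'y"
    and DA :: "nat set \<Rightarrow> ('x \<Rightarrow> 'y) \<Rightarrow> 'x \<Rightarrow> 'y"
  assumes closed: "\<And>c h. h \<in> F \<Longrightarrow> D c h \<in> F"
    and commute: "\<And>c c' h. h \<in> F \<Longrightarrow> D c (D c' h) = D c' (D c h)"
    and zero: "\<And>c. D c (\<lambda>_. 0) = (\<lambda>_. 0)"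
    and DA_closed: "\<And>S. finite S \<Longrightarrow> DA S f \<in> F"
    and DA_insert: "\<And>S b. finite S \<Longrightarrow> b \<notin> S \<Longrightarrow> DA (insert b S) f = D (v b) (DA S f)"
    and f: "\<forall>A\<in>T. DA A f = (\<lambda>_. 0)"
  shows "choices_in T Bs S \<Longrightarrow> finite S \<Longrightarrow>
    list_all2 (\<lambda>u B. \<forall>h\<in>F. (\<forall>b\<in>B. D (v b) h = (\<lambda>_. 0)) \<longrightarrow> D u h = (\<lambda>_. 0)) us Bs \<Longrightarrow>
    foldr D us (DA S f) = (\<lambda>_. 0)"
proof (induction Bs arbitrary: us S)
  case Nil
  then show ?case using f by simp
next
  case (Cons B Bs)
  then obtain u us' where us: "us = u # us'" by (cases us) auto
  define h where "h = foldr D us' (DA S f)"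
  have DA_S: "DA S f \<in> F" using DA_closed Cons.prems(2) .
  have "D (v b) h = (\<lambda>_. 0)" if b: "b \<in> B" for b
  proof -
    have IH: "foldr D us' (DA (insert b S) f) = (\<lambda>_. 0)"
      using Cons.IH[of "insert b S" us'] Cons.prems us b by simp
    show ?thesis
    proof (cases "b \<in> S")
      case True
      with IH show ?thesis by (simp add: h_def insert_absorb zero)
    next
      case False
      with IH show ?thesis
        using Cons.prems(2) foldr_commute_closed(1)[where F = F and D = D, OF closed commute DA_S]
        by (simp add: h_def DA_insert)
    qed
  qed
  moreover have "h \<in> F"
    unfolding h_def by (rule foldr_commute_closed(2)[where F = F and D = D, OF closed commute DA_S])
  ultimately show ?case using Cons.prems(3) us by (simp add: h_def)
qed

lemma list_all2_replicate_left: "list_all2 P (replicate (length ys) x) ys \<longleftrightarrow> (\<forall>y\<in>set ys. P x y)"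
  by (induction ys) auto

section \<open>Difference operators on the lattice\<close>

lemma nabla_commute: "nabla a (nabla b g) = nabla b (nabla a g)"
  by (auto simp: nabla_def fun_eq_iff algebra_simps)

lemma nabla_const_zero [simp]: "nabla a (\<lambda>_. 0) = (\<lambda>_. 0)"
  by (simp add: nabla_def)

lemma nabla_eq_zero_iff: "nabla a h = (\<lambda>_. 0) \<longleftrightarrow> (\<forall>x. h (x - a) = h x)"
  by (auto simp: nabla_def fun_eq_iff)

lemma nabla_linear_combination:
  "nabla a (\<lambda>x. \<Sum>i\<in>I. c i * F i x) = (\<lambda>x. \<Sum>i\<in>I. c i * nabla a (F i) x)"
  by (simp add: nabla_def fun_eq_iff sum_subtractf right_diff_distrib)

lemma nabla_set_empty [simp]: "nabla_set X {} f = f"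
  by (simp add: nabla_set_def)

lemma nabla_set_linear_combination:
  "nabla_set X A (\<lambda>x. \<Sum>i\<in>I. c i * F i x) = (\<lambda>x. \<Sum>i\<in>I. c i * nabla_set X A (F i) x)"
proof -
  have "foldr (\<lambda>i g. nabla (X!i) g) L (\<lambda>x. \<Sum>i\<in>I. c i * F i x)
      = (\<lambda>x. \<Sum>i\<in>I. c i * foldr (\<lambda>i g. nabla (X!i) g) L (F i) x)" for L
    by (induction L) (simp_all add: nabla_linear_combination)
  then show ?thesis unfolding nabla_set_def .
qed

lemma comp_fun_commute_nabla: "comp_fun_commute (\<lambda>i g. nabla (X ! i) g)"
  by unfold_locales (auto simp: fun_eq_iff nabla_commute[unfolded fun_eq_iff])

lemma nabla_set_insert:
  assumes "finite S" "b \<notin> S"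
  shows "nabla_set X (insert b S) f = nabla (X ! b) (nabla_set X S f)"
proof -
  interpret comp_fun_commute "\<lambda>i g. nabla (X ! i) g" by (rule comp_fun_commute_nabla)
  have "nabla_set X A f = Finite_Set.fold (\<lambda>i g. nabla (X ! i) g) f A" if "finite A" for A
    using that fold_set_fold_remdups[of f "rev (sorted_list_of_set A)"]
    by (simp add: nabla_set_def foldr_conv_fold distinct_remdups_id)
  with assms show ?thesis by simp
qed

lemma DM_linear_combination:
  assumes "set fs \<subseteq> DM X T"
  shows "(\<lambda>x. \<Sum>i<length fs. c i * (fs!i) x) \<in> DM X T"
proof -
  have "nabla_set X A (fs!i) = (\<lambda>_. 0)" if "A \<in> T" "i < length fs" for A i
    using assms that nth_mem unfolding DM_def by blast
  then show ?thesis by (simp add: DM_def nabla_set_linear_combination)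
qed

lemma nabla_zero_add:
  assumes "nabla a h = (\<lambda>_. 0)" "nabla b h = (\<lambda>_. 0)"
  shows "nabla (a + b) h = (\<lambda>_. 0)"
proof -
  have "h (x - (a + b)) = h x" for x
    using assms[unfolded nabla_eq_zero_iff] by (metis diff_diff_eq)
  then show ?thesis by (simp add: nabla_eq_zero_iff)
qed

lemma nabla_zero_uminus:
  assumes "nabla a h = (\<lambda>_. 0)"
  shows "nabla (- a) h = (\<lambda>_. 0)"
  using assms unfolding nabla_eq_zero_iff by (metis add_diff_cancel diff_minus_eq_add)

lemma nabla_zero_scale:
  fixes a :: "int ^ 'd"
  assumes a: "nabla a h = (\<lambda>_. 0)"
  shows "nabla (n *s a) h = (\<lambda>_. 0)"
proof -
  have nat_multiple: "nabla (of_nat m *s b) h = (\<lambda>_. 0)" if b: "nabla b h = (\<lambda>_. 0)" for m b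
  proof (induction m)
    case 0
    then show ?case by (simp add: nabla_def vec_eq_iff)
  next
    case (Suc m)
    have "of_nat (Suc m) *s b = of_nat m *s b + b" by (simp add: vec_eq_iff algebra_simps)
    with nabla_zero_add[OF Suc b] show ?case by (simp only:)
  qed
  show ?thesis
  proof (cases "n \<ge> 0")
    case True
    with nat_multiple[OF a, of "nat n"] show ?thesis by simp
  next
    case False
    then have "n *s a = of_nat (nat (- n)) *s (- a)" by (simp add: vec_eq_iff)
    with nat_multiple[OF nabla_zero_uminus[OF a]] show ?thesis by (simp only:)
  qed
qed

lemma nabla_zero_integer_combination:
  assumes "finite B" "\<forall>b\<in>B. nabla (w b) h = (\<lambda>_. 0)"
  shows "nabla (\<Sum>b\<in>B. n b *s w b) h = (\<lambda>_. 0)"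
  using assms
proof (induction B rule: finite_induct)
  case empty
  then show ?case by (simp add: nabla_def)
next
  case (insert b B)
  then show ?case by (simp add: nabla_zero_add nabla_zero_scale)
qed

lemma to_real_zero [simp]: "to_real 0 = 0"
  by (simp add: to_real_def vec_eq_iff)

lemma to_real_smult [simp]: "to_real (c *s a) = of_int c *\<^sub>R to_real a"
  by (simp add: to_real_def vec_eq_iff)

lemma to_real_sum: "to_real (\<Sum>i\<in>I. f i) = (\<Sum>i\<in>I. to_real (f i))"
  by (induction I rule: infinite_finite_induct) (simp_all add: to_real_def vec_eq_iff)

lemma independent_image_scalars_zero:
  fixes v :: "'i \<Rightarrow> 'a::euclidean_space"
  assumes indep: "independent (v ` B)" and inj: "inj_on v B"
    and zero: "(\<Sum>b\<in>B. c b *\<^sub>R v b) = 0" and "b \<in> B"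
  shows "c b = 0"
proof -
  let ?c = "\<lambda>w. c (the_inv_into B v w)"
  have "(\<Sum>w\<in>v ` B. ?c w *\<^sub>R w) = (\<Sum>b\<in>B. c b *\<^sub>R v b)"
    by (simp add: sum.reindex[OF inj] the_inv_into_f_f[OF inj])
  moreover have "\<forall>d. (\<Sum>w\<in>v ` B. d w *\<^sub>R w) = 0 \<longrightarrow> (\<forall>w\<in>v ` B. d w = 0)"
    using conjunct2[OF independent_explicit[THEN iffD1, OF indep]] .
  ultimately have "?c (v b) = 0" using zero \<open>b \<in> B\<close> by auto
  then show ?thesis using the_inv_into_f_f[OF inj \<open>b \<in> B\<close>] by simp
qed

lemma basis_indices_axis_multiple:
  fixes X :: "(int ^ 'd) list"
  assumes B: "basis_indices X B"
  obtains c n where "c \<noteq> 0" "axis k c = (\<Sum>b\<in>B. n b *s X!b)"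
proof -
  let ?v = "\<lambda>i. to_real (X!i)"
  have fin: "finite B" using basis_indices_finite[OF B] .
  have indep: "independent (?v ` B)" and inj: "inj_on ?v B"
    using B unfolding basis_indices_def by auto
  define I where "I = insert None (Some ` B)"
  define F where "F = (\<lambda>i j. case i of None \<Rightarrow> axis k 1 $ j | Some b \<Rightarrow> (X!b) $ j)"
  have "finite I" "card (UNIV :: 'd set) < card I"
    using fin card_basis_indices[OF B] by (auto simp: I_def card_image)
  \<comment> \<open>\<open>None\<close> indexes \<open>e\<^sub>k\<close>, \<open>Some b\<close> the basis vectors: \<open>d + 1\<close> vectors in \<open>\<int>\<^sup>d\<close> are dependent\<close>
  then obtain c where c: "\<exists>i\<in>I. c i \<noteq> 0" "\<forall>j. (\<Sum>i\<in>I. c i * F i j) = (0::int)"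
    using exists_nontrivial_relation_on_finite_set[of UNIV I F] by auto
  have "(\<Sum>i\<in>I. c i * F i j) = c None * axis k 1 $ j + (\<Sum>b\<in>B. c (Some b) * (X!b) $ j)" for j
    unfolding I_def using fin by (simp add: sum.reindex F_def)
  with c(2) have relation: "c None *s axis k 1 + (\<Sum>b\<in>B. c (Some b) *s X!b) = 0"
    by (simp add: vec_eq_iff sum_component)
  have "c None \<noteq> 0"
  proof
    assume c0: "c None = 0"
    with relation have "to_real (\<Sum>b\<in>B. c (Some b) *s X!b) = 0" by simp
    then have "(\<Sum>b\<in>B. of_int (c (Some b)) *\<^sub>R ?v b) = 0" by (simp add: to_real_sum)
    then have "\<forall>b\<in>B. c (Some b) = 0"
      using independent_image_scalars_zero[OF indep inj] by fastforce
    with c0 c(1) show False by (auto simp: I_def)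
  qed
  moreover have "axis k (c None) = (\<Sum>b\<in>B. (- c (Some b)) *s X!b)"
  proof -
    have "axis k (c None) = c None *s axis k 1" by (simp add: vec_eq_iff axis_def)
    also have "\<dots> = (\<Sum>b\<in>B. (- c (Some b)) *s X!b)"
      using relation by (simp add: vec_eq_iff sum_component sum_negf eq_neg_iff_add_eq_0)
    finally show ?thesis .
  qed
  ultimately show thesis by (rule that)
qed

lemma common_axis_period:
  fixes X :: "(int ^ 'd) list"
  obtains M :: int where "M > 0"
    "\<And>B k h. basis_indices X B \<Longrightarrow> \<forall>b\<in>B. nabla (X!b) h = (\<lambda>_. 0) \<Longrightarrow> nabla (axis k M) h = (\<lambda>_. 0)"
proof -
  define Q where "Q = {B. basis_indices X B} \<times> (UNIV :: 'd set)"
  have "\<forall>q\<in>Q. \<exists>c n. c \<noteq> 0 \<and> axis (snd q) c = (\<Sum>b\<in>fst q. n b *s X!b)"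
  proof
    fix q assume "q \<in> Q"
    show "\<exists>c n. c \<noteq> 0 \<and> axis (snd q) c = (\<Sum>b\<in>fst q. n b *s X!b)"
      by (rule basis_indices_axis_multiple[of X "fst q" "snd q"]) (use \<open>q \<in> Q\<close> in \<open>auto simp: Q_def\<close>)
  qed
  from bchoice[OF this] obtain c
    where "\<forall>q\<in>Q. \<exists>n. c q \<noteq> 0 \<and> axis (snd q) (c q) = (\<Sum>b\<in>fst q. n b *s X!b)"
    by (elim exE)
  from bchoice[OF this] obtain n
    where "\<forall>q\<in>Q. c q \<noteq> 0 \<and> axis (snd q) (c q) = (\<Sum>b\<in>fst q. n q b *s X!b)"
    by (elim exE)
  then have cn: "\<And>q. q \<in> Q \<Longrightarrow> c q \<noteq> 0 \<and> axis (snd q) (c q) = (\<Sum>b\<in>fst q. n q b *s X!b)"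
    by blast
  define M where "M = (\<Prod>q\<in>Q. \<bar>c q\<bar>)"
  have "finite Q"
    unfolding Q_def by (rule finite_cartesian_product[OF finite_basis_indices finite_class.finite_UNIV])
  then have "M > 0" unfolding M_def using cn by (intro prod_pos) auto
  moreover have "nabla (axis k M) h = (\<lambda>_. 0)"
    if B: "basis_indices X B" and h: "\<forall>b\<in>B. nabla (X!b) h = (\<lambda>_. 0)" for B k h
  proof -
    have q: "(B, k) \<in> Q" using B by (simp add: Q_def)
    then have "\<bar>c (B, k)\<bar> dvd M" unfolding M_def by (rule dvd_prodI[OF \<open>finite Q\<close>])
    then have "c (B, k) dvd M" by simp
    then obtain m where "M = c (B, k) * m" by blast
    then have "axis k M = m *s axis k (c (B, k))" by (simp add: vec_eq_iff axis_def)
    also have "\<dots> = m *s (\<Sum>b\<in>B. n (B, k) b *s X!b)" using cn[OF q] by simp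
    finally have "axis k M = m *s (\<Sum>b\<in>B. n (B, k) b *s X!b)" .
    moreover have "nabla (\<Sum>b\<in>B. n (B, k) b *s X!b) h = (\<lambda>_. 0)"
      by (rule nabla_zero_integer_combination[OF basis_indices_finite[OF B] h])
    ultimately show ?thesis by (simp add: nabla_zero_scale)
  qed
  ultimately show thesis by (rule that)
qed

lemma nabla_power_zero_on_line:
  fixes w x0 :: "int ^ 'd"
  assumes "foldr nabla (replicate r w) h = (\<lambda>_. 0)" "\<forall>i<r. h (x0 + of_nat i *s w) = 0"
  shows "h (x0 + n *s w) = 0"
  using assms
proof (induction r arbitrary: h x0 n)
  case 0
  then show ?case by simp
next
  case (Suc r)
  define g where "g = nabla w h"
  have "foldr nabla (replicate r w) g = foldr nabla (replicate (Suc r) w) h"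
    unfolding g_def by (induction r) (simp_all add: nabla_commute)
  with Suc.prems(1) have g0: "foldr nabla (replicate r w) g = (\<lambda>_. 0)" by simp
  have "\<forall>i<r. g ((x0 + w) + of_nat i *s w) = 0"
  proof (intro allI impI)
    fix i assume "i < r"
    then have "h (x0 + of_nat (Suc i) *s w) = 0" "h (x0 + of_nat i *s w) = 0"
      using Suc.prems(2) by auto
    moreover have "x0 + of_nat (Suc i) *s w = (x0 + w) + of_nat i *s w"
      by (simp add: vec_eq_iff algebra_simps)
    moreover have "(x0 + w) + of_nat i *s w - w = x0 + of_nat i *s w"
      by (simp add: vec_eq_iff algebra_simps)
    ultimately show "g ((x0 + w) + of_nat i *s w) = 0"
      by (simp add: g_def nabla_def add.assoc)
  qed
  from Suc.IH[OF g0 this] have "g ((x0 + w) + (i - 1) *s w) = 0" for i .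
  moreover have "(x0 + w) + (i - 1) *s w = x0 + i *s w" "x0 + i *s w - w = x0 + (i - 1) *s w" for i
    by (simp_all add: vec_eq_iff algebra_simps)
  \<comment> \<open>so \<open>h\<close> is constant along the line through \<open>x0\<close>, where it vanishes\<close>
  ultimately have step: "h (x0 + i *s w) = h (x0 + (i - 1) *s w)" for i
    by (simp add: g_def nabla_def)
  have "h (x0 + 0 *s w) = 0" using Suc.prems(2)[rule_format, of 0] by simp
  then show ?case
  proof (induction n rule: int_induct[where k = 0])
    case (step1 i)
    then show ?case using step[of "i + 1"] by simp
  next
    case (step2 i)
    then show ?case using step[of i] by simp
  qed
qed

lemma vanishes_if_vanishes_on_box:
  fixes h :: "int ^ 'd \<Rightarrow> int"
  assumes M: "M > 0"
    and annihilated: "\<And>k. foldr nabla (replicate r (axis k M)) h = (\<lambda>_. 0)"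
    and box: "\<And>y. \<forall>j. 0 \<le> y$j \<and> y$j < int r * M \<Longrightarrow> h y = 0"
  shows "h y = 0"
proof -
  \<comment> \<open>free the coordinates in \<open>K\<close> one at a time\<close>
  have "finite K \<Longrightarrow> \<forall>y. (\<forall>j. j \<notin> K \<longrightarrow> 0 \<le> y$j \<and> y$j < int r * M) \<longrightarrow> h y = 0"
    for K :: "'d set"
  proof (induction K rule: finite_induct)
    case empty
    then show ?case using box by simp
  next
    case (insert k K)
    show ?case
    proof (intro allI impI)
      fix y :: "int ^ 'd" assume y: "\<forall>j. j \<notin> insert k K \<longrightarrow> 0 \<le> y$j \<and> y$j < int r * M"
      define q where "q = y$k div M"
      define s where "s = y$k mod M"
      have s: "0 \<le> s" "s < M" "y$k = q * M + s" using M by (auto simp: q_def s_def)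
      define x0 where "x0 = y - q *s axis k M"
      have "h (x0 + n *s axis k M) = 0" for n
      proof (rule nabla_power_zero_on_line[OF annihilated], intro allI impI)
        fix i assume "i < r"
        let ?z = "x0 + of_nat i *s axis k M"
        have "(int i + 1) * M \<le> int r * M" using \<open>i < r\<close> M by (intro mult_right_mono) auto
        then have z_k: "0 \<le> ?z$k \<and> ?z$k < int r * M"
          using s M by (simp add: x0_def algebra_simps)
        have z_j: "?z$j = y$j" if "j \<noteq> k" for j using that by (simp add: x0_def axis_def)
        have "0 \<le> ?z$j \<and> ?z$j < int r * M" if "j \<notin> K" for j
          using z_k z_j[of j] y that by (cases "j = k") simp_all
        then show "h ?z = 0" using insert.IH by blast
      qed
      from this[of q] show "h y = 0" by (simp add: x0_def)
    qed
  qed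
  from this[of UNIV] show ?thesis by simp
qed

lemma finite_int_box: "finite {y :: int ^ 'd. \<forall>j. 0 \<le> y$j \<and> y$j < N}"
proof -
  have "{y :: int ^ 'd. \<forall>j. 0 \<le> y$j \<and> y$j < N} \<subseteq> vec_lambda ` (PiE UNIV (\<lambda>_. {0..<N}))"
  proof
    fix y :: "int ^ 'd" assume "y \<in> {y. \<forall>j. 0 \<le> y$j \<and> y$j < N}"
    then have "vec_nth y \<in> PiE UNIV (\<lambda>_. {0..<N})" by auto
    then show "y \<in> vec_lambda ` (PiE UNIV (\<lambda>_. {0..<N}))" by (metis image_eqI vec_nth_inverse)
  qed
  then show ?thesis by (rule finite_subset) (intro finite_imageI finite_PiE; simp)
qed

lemma finite_rank_DM:
  fixes X :: "(int ^ 'd) list" and T :: "nat set set"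
  assumes spans: "span (to_real ` set X) = UNIV"
    and T_up: "\<forall>A\<in>T. \<forall>B. A \<subseteq> B \<and> B \<subseteq> {..<length X} \<longrightarrow> B \<in> T"
    and coc: "cocircuits X \<subseteq> T"
  shows "finite_rank (DM X T)"
proof -
  obtain M where M: "M > 0"
    "\<And>B k h. basis_indices X B \<Longrightarrow> \<forall>b\<in>B. nabla (X!b) h = (\<lambda>_. 0) \<Longrightarrow> nabla (axis k M) h = (\<lambda>_. 0)"
    using common_axis_period[of X] by blast
  obtain Bs where Bs: "set Bs = {B. basis_indices X B}"
    using finite_list[OF finite_basis_indices] by blast
  define r where "r = length Bs"
  have annihilated: "foldr nabla (replicate r (axis k M)) f = (\<lambda>_. 0)" if "f \<in> DM X T" for f k
  proof -
    have "foldr nabla (replicate r (axis k M)) (nabla_set X {} f) = (\<lambda>_. 0)"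
    proof (rule foldr_annihilates_if_choices_in
        [where F = UNIV and v = "(!) X" and DA = "nabla_set X" and T = T])
      show "choices_in T Bs {}" by (rule choices_in_bases[OF spans T_up coc Bs])
      show "list_all2 (\<lambda>u B. \<forall>h\<in>UNIV. (\<forall>b\<in>B. nabla (X!b) h = (\<lambda>_. 0)) \<longrightarrow> nabla u h = (\<lambda>_. 0))
          (replicate r (axis k M)) Bs"
        unfolding r_def list_all2_replicate_left using M(2) Bs by blast
    qed (use that in \<open>simp_all add: DM_def nabla_commute nabla_set_insert\<close>)
    then show ?thesis by simp
  qed
  define S where "S = {y :: int ^ 'd. \<forall>j. 0 \<le> y$j \<and> y$j < int r * M}"
  show ?thesis
  proof (rule finite_rankI[of S _ "\<lambda>f y. f y"])
    show "finite S" unfolding S_def by (rule finite_int_box)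
    fix fs :: "(int ^ 'd \<Rightarrow> int) list" and c
    assume fs: "set fs \<subseteq> DM X T" and zero_on_S: "\<forall>y\<in>S. (\<Sum>i<length fs. c i * (fs!i) y) = 0"
    show "\<forall>x. (\<Sum>i<length fs. c i * (fs!i) x) = 0"
      using vanishes_if_vanishes_on_box[OF M(1) annihilated[OF DM_linear_combination[OF fs]]]
        zero_on_S unfolding S_def by blast
  qed
qed

section \<open>Directional derivatives of smooth functions\<close>

lemma dderivs_append: "dderivs (xs @ ys) f = dderivs xs (dderivs ys f)"
  by (induction xs) auto

lemma dderivs_eq_foldr: "dderivs us f = foldr dderiv us f"
  by (induction us) auto

lemma smooth_imp_differentiable: "smooth f \<Longrightarrow> f differentiable (at x)"
  unfolding smooth_def by (metis dderivs.simps(1))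

lemma smooth_dderivs: "smooth f \<Longrightarrow> smooth (dderivs as f)"
  unfolding smooth_def by (metis dderivs_append)

lemma smooth_dderiv: "smooth f \<Longrightarrow> smooth (dderiv a f)"
  using smooth_dderivs[of f "[a]"] by simp

lemma dderiv_const_zero [simp]: "dderiv a (\<lambda>_. 0) = (\<lambda>_. 0)"
  by (simp add: dderiv_def fun_eq_iff frechet_derivative_const)

lemma dderivs_const_zero [simp]: "dderivs as (\<lambda>_. 0) = (\<lambda>_. 0)"
  by (induction as) auto

lemma has_real_derivative_along_line:
  fixes g :: "real ^ 'd \<Rightarrow> real"
  assumes "\<forall>y. g differentiable (at y)"
  shows "((\<lambda>t. g (p + t *\<^sub>R a)) has_real_derivative dderiv a g (p + t *\<^sub>R a)) (at t)"
proof -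
  let ?D = "frechet_derivative g (at (p + t *\<^sub>R a))"
  have D: "(g has_derivative ?D) (at (p + t *\<^sub>R a))"
    using assms frechet_derivative_works by blast
  moreover have "((\<lambda>t. p + t *\<^sub>R a) has_derivative (\<lambda>h. h *\<^sub>R a)) (at t)"
    by (auto intro!: derivative_eq_intros)
  ultimately have "((\<lambda>t. g (p + t *\<^sub>R a)) has_derivative (\<lambda>h. ?D (h *\<^sub>R a))) (at t)"
    using has_derivative_compose by blast
  moreover have "(\<lambda>h. ?D (h *\<^sub>R a)) = (\<lambda>h. ?D a * h)"
    using linear_scale[OF has_derivative_linear[OF D]] by (auto simp: fun_eq_iff)
  ultimately show ?thesis by (simp add: has_field_derivative_def dderiv_def)
qed

lemma second_difference_mean_value:
  fixes g :: "real ^ 'd \<Rightarrow> real"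
  assumes g: "smooth g" and t: "t > 0"
  obtains \<xi> \<eta> where "0 < \<xi>" "\<xi> < t" "0 < \<eta>" "\<eta> < t"
    "g (x + t *\<^sub>R a + t *\<^sub>R b) - g (x + t *\<^sub>R a) - g (x + t *\<^sub>R b) + g x
      = t * t * dderiv b (dderiv a g) (x + \<xi> *\<^sub>R a + \<eta> *\<^sub>R b)"
proof -
  have dg: "\<forall>y. g differentiable (at y)" and dga: "\<forall>y. dderiv a g differentiable (at y)"
    using g smooth_dderiv smooth_imp_differentiable by blast+
  define \<phi> where "\<phi> = (\<lambda>u. g ((x + t *\<^sub>R b) + u *\<^sub>R a) - g (x + u *\<^sub>R a))"
  define \<phi>' where "\<phi>' = (\<lambda>u. dderiv a g ((x + t *\<^sub>R b) + u *\<^sub>R a) - dderiv a g (x + u *\<^sub>R a))"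
  have "(\<phi> has_real_derivative \<phi>' u) (at u)" for u
    unfolding \<phi>_def \<phi>'_def by (intro DERIV_diff has_real_derivative_along_line dg)
  then obtain \<xi> where \<xi>: "0 < \<xi>" "\<xi> < t" "\<phi> t - \<phi> 0 = t * \<phi>' \<xi>"
    using MVT2[OF t, of \<phi> \<phi>'] by auto
  define \<psi> where "\<psi> = (\<lambda>v. dderiv a g ((x + \<xi> *\<^sub>R a) + v *\<^sub>R b))"
  define \<psi>' where "\<psi>' = (\<lambda>v. dderiv b (dderiv a g) ((x + \<xi> *\<^sub>R a) + v *\<^sub>R b))"
  have "(\<psi> has_real_derivative \<psi>' v) (at v)" for v
    unfolding \<psi>_def \<psi>'_def by (intro has_real_derivative_along_line dga)
  then obtain \<eta> where \<eta>: "0 < \<eta>" "\<eta> < t" "\<psi> t - \<psi> 0 = t * \<psi>' \<eta>"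
    using MVT2[OF t, of \<psi> \<psi>'] by auto
  have "\<phi>' \<xi> = \<psi> t - \<psi> 0" unfolding \<phi>'_def \<psi>_def by (simp add: algebra_simps)
  with \<xi>(3) \<eta>(3) have "\<phi> t - \<phi> 0 = t * t * \<psi>' \<eta>" by simp
  moreover have "\<phi> t - \<phi> 0 = g (x + t *\<^sub>R a + t *\<^sub>R b) - g (x + t *\<^sub>R a) - g (x + t *\<^sub>R b) + g x"
    unfolding \<phi>_def by (simp add: algebra_simps)
  ultimately show thesis using \<xi>(1,2) \<eta>(1,2) that unfolding \<psi>'_def by simp
qed

lemma dist_add_scaled_le:
  fixes a b :: "'a::real_normed_vector"
  assumes "0 < \<xi>" "\<xi> < t" "0 < \<eta>" "\<eta> < t"
  shows "dist (x + \<xi> *\<^sub>R a + \<eta> *\<^sub>R b) x \<le> t * (norm a + norm b)"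
proof -
  have "dist (x + \<xi> *\<^sub>R a + \<eta> *\<^sub>R b) x \<le> \<xi> * norm a + \<eta> * norm b"
    using norm_triangle_ineq[of "\<xi> *\<^sub>R a" "\<eta> *\<^sub>R b"] assms by (simp add: dist_norm)
  also have "\<dots> \<le> t * norm a + t * norm b"
    using assms by (intro add_mono mult_right_mono) auto
  finally show ?thesis by (simp add: distrib_left)
qed

text \<open>Schwarz's theorem: both mixed derivatives are limits of the same second difference quotient.\<close>
lemma dderiv_commute:
  fixes g :: "real ^ 'd \<Rightarrow> real"
  assumes g: "smooth g"
  shows "dderiv a (dderiv b g) = dderiv b (dderiv a g)"
proof (rule ext, rule ccontr)
  fix x
  define F where "F = dderiv b (dderiv a g)"
  define G where "G = dderiv a (dderiv b g)"
  assume "G x \<noteq> F x"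
  define e where "e = \<bar>F x - G x\<bar> / 2"
  have e: "e > 0" using \<open>G x \<noteq> F x\<close> by (simp add: e_def)
  have "continuous (at x) F" "continuous (at x) G"
    unfolding F_def G_def using g smooth_dderiv smooth_imp_differentiable
    by (blast intro: differentiable_imp_continuous_within)+
  then obtain dF dG where dF: "dF > 0" "\<forall>y. dist y x < dF \<longrightarrow> dist (F y) (F x) < e"
    and dG: "dG > 0" "\<forall>y. dist y x < dG \<longrightarrow> dist (G y) (G x) < e"
    using e unfolding continuous_at_eps_delta by blast
  define d where "d = min dF dG"
  have d: "d > 0" "\<And>y. dist y x < d \<Longrightarrow> dist (F y) (F x) < e \<and> dist (G y) (G x) < e"
    using dF dG by (auto simp: d_def)
  define t where "t = d / (norm a + norm b + 1)"
  have t: "t > 0" "t * (norm a + norm b) < d"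
    using d(1) by (auto simp: t_def field_simps add_pos_nonneg)
  obtain \<xi> \<eta> where p: "0 < \<xi>" "\<xi> < t" "0 < \<eta>" "\<eta> < t"
    "g (x + t *\<^sub>R a + t *\<^sub>R b) - g (x + t *\<^sub>R a) - g (x + t *\<^sub>R b) + g x
      = t * t * F (x + \<xi> *\<^sub>R a + \<eta> *\<^sub>R b)"
    using second_difference_mean_value[OF g t(1)] unfolding F_def by blast
  obtain \<xi>' \<eta>' where q: "0 < \<xi>'" "\<xi>' < t" "0 < \<eta>'" "\<eta>' < t"
    "g (x + t *\<^sub>R b + t *\<^sub>R a) - g (x + t *\<^sub>R b) - g (x + t *\<^sub>R a) + g x
      = t * t * G (x + \<xi>' *\<^sub>R b + \<eta>' *\<^sub>R a)"
    using second_difference_mean_value[OF g t(1)] unfolding G_def by blast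
  have swap: "x + t *\<^sub>R b + t *\<^sub>R a = x + t *\<^sub>R a + t *\<^sub>R b" by (simp add: algebra_simps)
  have "t * t * F (x + \<xi> *\<^sub>R a + \<eta> *\<^sub>R b) = t * t * G (x + \<xi>' *\<^sub>R b + \<eta>' *\<^sub>R a)"
    using p(5) q(5)[unfolded swap] by linarith
  with t(1) have same: "F (x + \<xi> *\<^sub>R a + \<eta> *\<^sub>R b) = G (x + \<xi>' *\<^sub>R b + \<eta>' *\<^sub>R a)"
    by simp
  have "dist (x + \<xi> *\<^sub>R a + \<eta> *\<^sub>R b) x < d" "dist (x + \<xi>' *\<^sub>R b + \<eta>' *\<^sub>R a) x < d"
    using dist_add_scaled_le[OF p(1-4), of x a b] dist_add_scaled_le[OF q(1-4), of x b a] t(2)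
    by (simp_all add: add.commute)
  then have "\<bar>F (x + \<xi> *\<^sub>R a + \<eta> *\<^sub>R b) - F x\<bar> < e" "\<bar>G (x + \<xi>' *\<^sub>R b + \<eta>' *\<^sub>R a) - G x\<bar> < e"
    using d(2) by (simp_all add: dist_real_def)
  with same have "\<bar>F x - G x\<bar> < 2 * e" by arith
  then show False by (simp add: e_def)
qed

lemma dderivs_move_to_front:
  "smooth f \<Longrightarrow> dderivs (xs @ a # ys) f = dderivs (a # xs @ ys) f"
proof (induction xs)
  case (Cons x xs)
  then show ?case
    using dderiv_commute[OF smooth_dderivs[OF Cons.prems, of "xs @ ys"]] by simp
qed simp

lemma dderivs_mset_eq: "smooth f \<Longrightarrow> mset as = mset bs \<Longrightarrow> dderivs as f = dderivs bs f"
proof (induction as arbitrary: bs)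
  case (Cons a as)
  then obtain xs ys where bs: "bs = xs @ a # ys"
    by (metis list.set_intros(1) set_mset_mset split_list)
  with Cons have "dderivs as f = dderivs (xs @ ys) f" by simp
  with dderivs_move_to_front[OF Cons.prems(1)] bs show ?case by simp
qed simp

lemma smooth_partial_set: "smooth f \<Longrightarrow> smooth (partial_set X S f)"
  unfolding partial_set_def by (rule smooth_dderivs)

lemma partial_set_insert:
  assumes "smooth f" "finite S" "b \<notin> S"
  shows "partial_set X (insert b S) f = dderiv (to_real (X!b)) (partial_set X S f)"
proof -
  have "mset (map (\<lambda>i. to_real (X!i)) (sorted_list_of_set (insert b S)))
      = mset (to_real (X!b) # map (\<lambda>i. to_real (X!i)) (sorted_list_of_set S))"
    using assms by (simp add: mset_map)
  from dderivs_mset_eq[OF assms(1) this] show ?thesis unfolding partial_set_def by simp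
qed

lemma dderivs_linear_combination:
  fixes F :: "'i \<Rightarrow> real ^ 'd \<Rightarrow> real"
  assumes "\<forall>i\<in>I. smooth (F i)"
  shows "dderivs as (\<lambda>x. \<Sum>i\<in>I. c i * F i x) = (\<lambda>x. \<Sum>i\<in>I. c i * dderivs as (F i) x)"
    and "smooth (\<lambda>x. \<Sum>i\<in>I. c i * F i x)"
proof -
  have derivative: "((\<lambda>x. \<Sum>i\<in>I. c i * dderivs as (F i) x) has_derivative
        (\<lambda>h. \<Sum>i\<in>I. c i * frechet_derivative (dderivs as (F i)) (at x) h)) (at x)" for as x
  proof -
    have "\<forall>i\<in>I. (dderivs as (F i) has_derivative frechet_derivative (dderivs as (F i)) (at x)) (at x)"
      using assms smooth_imp_differentiable[OF smooth_dderivs] frechet_derivative_works by blast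
    then show ?thesis by (auto intro!: derivative_eq_intros)
  qed
  show eq: "dderivs as (\<lambda>x. \<Sum>i\<in>I. c i * F i x) = (\<lambda>x. \<Sum>i\<in>I. c i * dderivs as (F i) x)" for as
  proof (induction as)
    case (Cons a as)
    have "dderivs (a # as) (\<lambda>x. \<Sum>i\<in>I. c i * F i x)
        = dderiv a (\<lambda>x. \<Sum>i\<in>I. c i * dderivs as (F i) x)"
      using Cons.IH by simp
    also have "\<dots> = (\<lambda>x. \<Sum>i\<in>I. c i * dderivs (a # as) (F i) x)"
      by (rule ext) (simp add: dderiv_def frechet_derivative_at[OF derivative, symmetric])
    finally show ?case .
  qed simp
  show "smooth (\<lambda>x. \<Sum>i\<in>I. c i * F i x)"
    unfolding smooth_def eq differentiable_def using derivative by blast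
qed

lemma Dsp_linear_combination:
  assumes "set fs \<subseteq> Dsp X T"
  shows "(\<lambda>x. \<Sum>i<length fs. c i * (fs!i) x) \<in> Dsp X T"
proof -
  have smooth: "\<forall>i\<in>{..<length fs}. smooth (fs!i)"
    using assms by (auto simp: Dsp_def dest!: nth_mem)
  have "partial_set X A (fs!i) = (\<lambda>_. 0)" if "A \<in> T" "i < length fs" for A i
    using assms that nth_mem unfolding Dsp_def by blast
  then show ?thesis
    using dderivs_linear_combination[OF smooth]
    by (simp add: Dsp_def partial_set_def)
qed

lemma dderiv_zero_if_zero_on_spanning:
  assumes "smooth h" "u \<in> span W" "\<forall>w\<in>W. dderiv w h = (\<lambda>_. 0)"
  shows "dderiv u h = (\<lambda>_. 0)"
proof
  fix x
  have "(h has_derivative frechet_derivative h (at x)) (at x)"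
    using smooth_imp_differentiable[OF assms(1)] frechet_derivative_works by blast
  then have "linear (frechet_derivative h (at x))" by (rule has_derivative_linear)
  moreover have "frechet_derivative h (at x) w = 0" if "w \<in> W" for w
    using assms(3) that unfolding dderiv_def by meson
  ultimately show "dderiv u h x = 0"
    unfolding dderiv_def using linear_eq_0_on_span assms(2) by blast
qed

lemma dderiv_power_zero_on_line:
  fixes g :: "real ^ 'd \<Rightarrow> real"
  assumes "smooth g" "dderivs (replicate r w) g = (\<lambda>_. 0)" "\<forall>i<r. dderivs (replicate i w) g x0 = 0"
  shows "g (x0 + t *\<^sub>R w) = 0"
  using assms
proof (induction r arbitrary: g t)
  case 0
  then show ?case by simp
next
  case (Suc r)
  define g' where "g' = dderiv w g"
  have replicate_g': "dderivs (replicate i w) g' = dderivs (replicate (Suc i) w) g" for i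
    by (simp add: dderivs_append g'_def flip: replicate_append_same)
  have "dderivs (replicate r w) g' = (\<lambda>_. 0)"
    using replicate_g'[of r] Suc.prems(2) by (simp only:)
  moreover have "\<forall>i<r. dderivs (replicate i w) g' x0 = 0"
  proof (intro allI impI)
    fix i assume "i < r"
    then have "dderivs (replicate (Suc i) w) g x0 = 0" using Suc.prems(3) by blast
    with replicate_g'[of i] show "dderivs (replicate i w) g' x0 = 0" by (simp only:)
  qed
  ultimately have "g' (x0 + s *\<^sub>R w) = 0" for s
    using Suc.IH[of g'] smooth_dderiv[OF Suc.prems(1)] by (simp add: g'_def)
  then have "((\<lambda>s. g (x0 + s *\<^sub>R w)) has_real_derivative 0) (at s)" for s
    using has_real_derivative_along_line[of g x0 w s] smooth_imp_differentiable[OF Suc.prems(1)]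
    by (simp add: g'_def)
  then have "g (x0 + t *\<^sub>R w) = g (x0 + 0 *\<^sub>R w)"
    using DERIV_isconst_all[of "\<lambda>s. g (x0 + s *\<^sub>R w)"] by blast
  also have "\<dots> = 0" using Suc.prems(3)[rule_format, of 0] by simp
  finally show ?case .
qed

lemma dderivs_zero_if_count_ge:
  fixes f :: "real ^ 'd \<Rightarrow> real"
  assumes f: "smooth f" and zero: "dderivs (replicate r e) f = (\<lambda>_. 0)" and "r \<le> count_list as e"
  shows "dderivs as f = (\<lambda>_. 0)"
proof -
  have "replicate_mset r e \<subseteq># mset as"
    using assms(3) by (simp add: subseteq_mset_def count_mset)
  moreover obtain rest where "mset rest = mset as - replicate_mset r e" using ex_mset by blast
  ultimately have "mset as = mset (rest @ replicate r e)" by (simp add: subset_mset.diff_add)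
  then have "dderivs as f = dderivs (rest @ replicate r e) f" by (rule dderivs_mset_eq[OF f])
  with zero show ?thesis by (simp add: dderivs_append)
qed

lemma dderivs_zero_if_long:
  fixes f :: "real ^ 'd \<Rightarrow> real"
  assumes f: "smooth f" and zero: "\<And>k. dderivs (replicate r (axis k 1)) f = (\<lambda>_. 0)"
    and as: "set as \<subseteq> range (\<lambda>k. axis k 1)" "CARD('d) * r < length as"
  shows "dderivs as f = (\<lambda>_. 0)"
proof -
  let ?E = "range (\<lambda>k::'d. axis k (1::real))"
  have "\<exists>e\<in>?E. r \<le> count_list as e"
  proof (rule ccontr)
    assume none: "\<not> ?thesis"
    have "length as = (\<Sum>e\<in>?E. count_list as e)" using sum_count_set[OF as(1)] by simp
    also have "\<dots> \<le> (\<Sum>e\<in>?E. r)" using none nat_le_linear by (intro sum_mono) blast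
    also have "\<dots> \<le> CARD('d) * r" using card_image_le[of UNIV "\<lambda>k::'d. axis k (1::real)"] by simp
    finally show False using as(2) by simp
  qed
  then show ?thesis using dderivs_zero_if_count_ge[OF f zero] by blast
qed

lemma vanishes_if_low_order_dderivs_vanish_at_origin:
  fixes f :: "real ^ 'd \<Rightarrow> real"
  assumes f: "smooth f"
    and zero: "\<And>k. dderivs (replicate r (axis k 1)) f = (\<lambda>_. 0)"
    and low: "\<And>as. set as \<subseteq> range (\<lambda>k. axis k 1) \<Longrightarrow> length as \<le> CARD('d) * r \<Longrightarrow> dderivs as f 0 = 0"
  shows "f y = 0"
proof -
  let ?E = "range (\<lambda>k::'d. axis k (1::real))"
  have at_origin: "dderivs as f 0 = 0" if "set as \<subseteq> ?E" for as
    using low[OF that] dderivs_zero_if_long[OF f zero that] by force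
  \<comment> \<open>free the coordinates in \<open>K\<close> one at a time\<close>
  have "finite K \<Longrightarrow> \<forall>as y. set as \<subseteq> ?E \<longrightarrow> (\<forall>j. j \<notin> K \<longrightarrow> y$j = 0) \<longrightarrow> dderivs as f y = 0"
    for K :: "'d set"
  proof (induction K rule: finite_induct)
    case empty
    have "y = 0" if "\<forall>j. y$j = 0" for y :: "real ^ 'd" using that by (simp add: vec_eq_iff)
    then show ?case using at_origin by auto
  next
    case (insert k K)
    show ?case
    proof (intro allI impI)
      fix as and y :: "real ^ 'd"
      assume as: "set as \<subseteq> ?E" and y: "\<forall>j. j \<notin> insert k K \<longrightarrow> y$j = 0"
      define w where "w = axis k (1::real)"
      define y0 where "y0 = y - (y$k) *\<^sub>R w"
      have y0: "\<forall>j. j \<notin> K \<longrightarrow> y0$j = 0" using y by (auto simp: y0_def w_def axis_def)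
      have "dderivs (replicate r w @ as) f = dderivs (as @ replicate r w) f"
        by (rule dderivs_mset_eq[OF f]) simp
      then have "dderivs (replicate r w) (dderivs as f) = (\<lambda>_. 0)"
        using zero by (simp add: dderivs_append w_def)
      moreover have "\<forall>i<r. dderivs (replicate i w) (dderivs as f) y0 = 0"
      proof (intro allI impI)
        fix i
        have "set (replicate i w @ as) \<subseteq> ?E" using as by (auto simp: w_def)
        with insert.IH y0 have "dderivs (replicate i w @ as) f y0 = 0" by blast
        then show "dderivs (replicate i w) (dderivs as f) y0 = 0" by (simp add: dderivs_append)
      qed
      ultimately have "dderivs as f (y0 + (y$k) *\<^sub>R w) = 0"
        by (rule dderiv_power_zero_on_line[OF smooth_dderivs[OF f]])
      then show "dderivs as f y = 0" by (simp add: y0_def)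
    qed
  qed
  from this[of UNIV, rule_format, of "[]" y] show ?thesis by simp
qed

lemma finite_rank_Dsp:
  fixes X :: "(int ^ 'd) list" and T :: "nat set set"
  assumes spans: "span (to_real ` set X) = UNIV"
    and T_up: "\<forall>A\<in>T. \<forall>B. A \<subseteq> B \<and> B \<subseteq> {..<length X} \<longrightarrow> B \<in> T"
    and coc: "cocircuits X \<subseteq> T"
  shows "finite_rank (Dsp X T)"
proof -
  obtain Bs where Bs: "set Bs = {B. basis_indices X B}"
    using finite_list[OF finite_basis_indices] by blast
  define r where "r = length Bs"
  let ?v = "\<lambda>i. to_real (X!i)"
  have annihilated: "dderivs (replicate r (axis k 1)) f = (\<lambda>_. 0)" if "f \<in> Dsp X T" for f k
  proof -
    from that have f: "smooth f" "\<forall>A\<in>T. partial_set X A f = (\<lambda>_. 0)" by (simp_all add: Dsp_def)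
    have "foldr dderiv (replicate r (axis k 1)) (partial_set X {} f) = (\<lambda>_. 0)"
    proof (rule foldr_annihilates_if_choices_in
        [where F = "{h. smooth h}" and v = ?v and DA = "partial_set X" and T = T])
      show "choices_in T Bs {}" by (rule choices_in_bases[OF spans T_up coc Bs])
      have "axis k 1 \<in> span (?v ` B)" if "basis_indices X B" for B
        using that by (simp add: basis_indices_def)
      then show "list_all2 (\<lambda>u B. \<forall>h\<in>{h. smooth h}. (\<forall>b\<in>B. dderiv (?v b) h = (\<lambda>_. 0))
          \<longrightarrow> dderiv u h = (\<lambda>_. 0)) (replicate r (axis k 1)) Bs"
        unfolding r_def list_all2_replicate_left using Bs
        by (auto intro: dderiv_zero_if_zero_on_spanning)
    qed (simp_all add: f smooth_dderiv dderiv_commute smooth_partial_set partial_set_insert)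
    then show ?thesis by (simp add: partial_set_def dderivs_eq_foldr)
  qed
  define L where "L = {as. set as \<subseteq> range (\<lambda>k::'d. axis k (1::real)) \<and> length as \<le> CARD('d) * r}"
  show ?thesis
  proof (rule finite_rankI[of L _ "\<lambda>f as. dderivs as f 0"])
    show "finite L" unfolding L_def by (rule finite_lists_length_le) simp
    fix fs :: "(real ^ 'd \<Rightarrow> real) list" and c
    assume fs: "set fs \<subseteq> Dsp X T" and zero_on_L: "\<forall>as\<in>L. (\<Sum>i<length fs. c i * dderivs as (fs!i) 0) = 0"
    let ?g = "\<lambda>x. \<Sum>i<length fs. c i * (fs!i) x"
    have g: "?g \<in> Dsp X T" by (rule Dsp_linear_combination[OF fs])
    have "dderivs as ?g = (\<lambda>x. \<Sum>i<length fs. c i * dderivs as (fs!i) x)" for as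
      using fs by (intro dderivs_linear_combination) (auto simp: Dsp_def dest!: nth_mem)
    with zero_on_L have "dderivs as ?g 0 = 0" if "as \<in> L" for as using that by simp
    then show "\<forall>x. ?g x = 0"
      using vanishes_if_low_order_dderivs_vanish_at_origin[OF _ annihilated[OF g]] g
      by (auto simp: Dsp_def L_def)
  qed
qed

section \<open>Missing cocircuits give infinite rank\<close>

lemma spanned_hyperplane_normal:
  fixes X :: "(int ^ 'd) list"
  assumes "spanned_hyperplane X H"
  obtains n where "n \<noteq> 0" "H = {y. n \<bullet> y = 0}"
proof -
  obtain S where S: "H = span S" and dim_H: "dim H = CARD('d) - 1"
    using assms unfolding spanned_hyperplane_def by blast
  then have "dim H < DIM(real ^ 'd)" by simp
  then obtain n where n: "n \<noteq> 0" "\<And>y. y \<in> span H \<Longrightarrow> orthogonal n y"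
    using orthogonal_to_subspace_exists by blast
  have "H = {y. n \<bullet> y = 0}"
  proof (rule subspace_dim_equal)
    show "subspace H" using S by simp
    show "H \<subseteq> {y. n \<bullet> y = 0}" using n(2) span_base unfolding orthogonal_def by blast
    show "dim {y. n \<bullet> y = 0} \<le> dim H" using dim_hyperplane[OF n(1)] dim_H by simp
  qed (rule subspace_hyperplane)
  with n(1) show thesis by (rule that)
qed

lemma normal_of_missing_cocircuit:
  fixes X :: "(int ^ 'd) list"
  assumes spans: "span (to_real ` set X) = UNIV"
    and T_sub: "T \<subseteq> Pow {..<length X}"
    and T_up: "\<forall>A\<in>T. \<forall>B. A \<subseteq> B \<and> B \<subseteq> {..<length X} \<longrightarrow> B \<in> T"
    and C: "C \<in> cocircuits X" "C \<notin> T"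
  obtains n v where "n \<bullet> to_real v \<noteq> 0" "\<And>A. A \<in> T \<Longrightarrow> \<exists>i\<in>A. n \<bullet> to_real (X!i) = 0"
proof -
  obtain H where H: "spanned_hyperplane X H" "C = {i. i < length X \<and> to_real (X ! i) \<notin> H}"
    using C(1) unfolding cocircuits_def by blast
  obtain n where n: "n \<noteq> 0" "H = {y. n \<bullet> y = 0}" by (rule spanned_hyperplane_normal[OF H(1)])
  have "\<not> to_real ` set X \<subseteq> H"
  proof
    assume "to_real ` set X \<subseteq> H"
    then have "span (to_real ` set X) \<subseteq> H"
      using n(2) by (intro span_minimal) (auto intro: subspace_hyperplane)
    with spans have "n \<bullet> n = 0" unfolding n(2) by blast
    with n(1) show False by simp
  qed
  then obtain v where "n \<bullet> to_real v \<noteq> 0" using n(2) by blast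
  moreover have "\<exists>i\<in>A. n \<bullet> to_real (X!i) = 0" if "A \<in> T" for A
  proof (rule ccontr)
    assume "\<not> ?thesis"
    with that T_sub H(2) n(2) have "A \<subseteq> C" by auto
    with that T_up H(2) have "C \<in> T" by blast
    with C(2) show False ..
  qed
  ultimately show thesis by (rule that)
qed

lemma nabla_set_nabla_commute: "nabla_set X S (nabla a f) = nabla a (nabla_set X S f)"
proof -
  have "foldr (\<lambda>i g. nabla (X!i) g) L (nabla a f) = nabla a (foldr (\<lambda>i g. nabla (X!i) g) L f)" for L
    by (induction L) (simp_all add: nabla_commute)
  then show ?thesis unfolding nabla_set_def .
qed

lemma nabla_set_const_zero [simp]: "nabla_set X S (\<lambda>_. 0) = (\<lambda>_. 0)"
proof -
  have "foldr (\<lambda>i g. nabla (X!i) g) L (\<lambda>_. 0) = (\<lambda>_. 0)" for L :: "nat list"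
    by (induction L) simp_all
  then show ?thesis unfolding nabla_set_def .
qed

lemma nabla_set_zero_if_nabla_member_zero:
  assumes "finite A" "i \<in> A" "nabla (X!i) f = (\<lambda>_. 0)"
  shows "nabla_set X A f = (\<lambda>_. 0)"
proof -
  have "A = insert i (A - {i})" using assms(2) by blast
  then have "nabla_set X A f = nabla (X!i) (nabla_set X (A - {i}) f)"
    using nabla_set_insert[of "A - {i}" i X f] assms(1) by simp
  with assms(3) show ?thesis by (simp add: nabla_set_nabla_commute[symmetric])
qed

lemma to_real_diff [simp]: "to_real (a - b) = to_real a - to_real b"
  by (simp add: to_real_def vec_eq_iff)

lemma ridge_function_in_DM:
  fixes X :: "(int ^ 'd) list" and G :: "real \<Rightarrow> int"
  assumes T_sub: "T \<subseteq> Pow {..<length X}"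
    and hits: "\<And>A. A \<in> T \<Longrightarrow> \<exists>i\<in>A. n \<bullet> to_real (X!i) = 0"
  shows "(\<lambda>x. G (n \<bullet> to_real x)) \<in> DM X T"
proof -
  have "nabla_set X A (\<lambda>x. G (n \<bullet> to_real x)) = (\<lambda>_. 0)" if A: "A \<in> T" for A
  proof -
    obtain i where i: "i \<in> A" "n \<bullet> to_real (X!i) = 0" using hits[OF A] by blast
    have "nabla (X!i) (\<lambda>x. G (n \<bullet> to_real x)) = (\<lambda>_. 0)"
      using i(2) by (simp add: nabla_def inner_diff_right)
    moreover have "finite A" using A T_sub by (auto intro: finite_subset)
    ultimately show ?thesis using nabla_set_zero_if_nabla_member_zero i(1) by blast
  qed
  then show ?thesis by (simp add: DM_def)
qed

lemma lin_indep_fun_level_indicators: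
  fixes n :: "real ^ 'd" and v :: "int ^ 'd"
  assumes v: "n \<bullet> to_real v \<noteq> 0"
  shows "lin_indep_fun (map (\<lambda>k x. if n \<bullet> to_real x = of_nat k * (n \<bullet> to_real v) then 1 else 0 :: int)
    [0..<N])" (is "lin_indep_fun ?fs")
  unfolding lin_indep_fun_def
proof (intro allI impI)
  fix c :: "nat \<Rightarrow> int" and i
  assume zero: "\<forall>x. (\<Sum>j<length ?fs. c j * (?fs!j) x) = 0" and "i < length ?fs"
  then have "i < N" by simp
  have "(\<Sum>j<length ?fs. c j * (?fs!j) (of_nat i *s v)) = (\<Sum>j<N. c j * (if j = i then 1 else 0))"
    using v by (intro sum.cong) (auto simp: inner_scaleR_right)
  also have "\<dots> = c i" using \<open>i < N\<close> by (simp add: if_distrib[of "\<lambda>t. c _ * t"] cong: if_cong)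
  finally show "c i = 0" using zero[rule_format, of "of_nat i *s v"] by simp
qed

lemma not_finite_rank_DM:
  fixes X :: "(int ^ 'd) list"
  assumes spans: "span (to_real ` set X) = UNIV"
    and T_sub: "T \<subseteq> Pow {..<length X}"
    and T_up: "\<forall>A\<in>T. \<forall>B. A \<subseteq> B \<and> B \<subseteq> {..<length X} \<longrightarrow> B \<in> T"
    and C: "C \<in> cocircuits X" "C \<notin> T"
  shows "\<not> finite_rank (DM X T)"
proof (rule not_finite_rankI)
  fix N
  obtain n v where v: "n \<bullet> to_real v \<noteq> 0" and hits: "\<And>A. A \<in> T \<Longrightarrow> \<exists>i\<in>A. n \<bullet> to_real (X!i) = 0"
    using normal_of_missing_cocircuit[OF spans T_sub T_up C] by blast
  let ?fs = "map (\<lambda>k x. if n \<bullet> to_real x = of_nat k * (n \<bullet> to_real v) then 1 else 0 :: int) [0..<N]"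
  have "set ?fs \<subseteq> DM X T"
    using ridge_function_in_DM[OF T_sub hits, of "\<lambda>t. if t = of_nat _ * (n \<bullet> to_real v) then 1 else 0"]
    by auto
  with lin_indep_fun_level_indicators[OF v] show "\<exists>fs. set fs \<subseteq> DM X T \<and> lin_indep_fun fs \<and> length fs = N"
    by (intro exI[of _ ?fs]) simp
qed

lemma partial_set_dderiv_commute:
  assumes "smooth f"
  shows "partial_set X S (dderiv a f) = dderiv a (partial_set X S f)"
  using dderivs_mset_eq[OF assms, of "_ @ [a]" "a # _"]
  by (simp add: partial_set_def dderivs_append)

lemma partial_set_zero_if_dderiv_member_zero:
  assumes "smooth f" "finite A" "i \<in> A" "dderiv (to_real (X!i)) f = (\<lambda>_. 0)"
  shows "partial_set X A f = (\<lambda>_. 0)"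
proof -
  have "A = insert i (A - {i})" using assms(3) by blast
  then have "partial_set X A f = dderiv (to_real (X!i)) (partial_set X (A - {i}) f)"
    using partial_set_insert[OF assms(1), of "A - {i}" i X] assms(2) by simp
  also have "\<dots> = partial_set X (A - {i}) (dderiv (to_real (X!i)) f)"
    by (rule partial_set_dderiv_commute[symmetric, OF assms(1)])
  finally show ?thesis using assms(4) by (simp add: partial_set_def)
qed

lemma dderiv_power_of_linear_form:
  fixes n :: "real ^ 'd"
  shows "dderiv a (\<lambda>x. c * (n \<bullet> x) ^ m) = (\<lambda>x. (c * of_nat m * (n \<bullet> a)) * (n \<bullet> x) ^ (m - 1))"
proof
  fix x
  have "((\<lambda>x. c * (n \<bullet> x) ^ m) has_derivative (\<lambda>h. (c * of_nat m * (n \<bullet> h)) * (n \<bullet> x) ^ (m - 1))) (at x)"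
    by (auto intro!: derivative_eq_intros simp: algebra_simps)
  then show "dderiv a (\<lambda>x. c * (n \<bullet> x) ^ m) x = (c * of_nat m * (n \<bullet> a)) * (n \<bullet> x) ^ (m - 1)"
    unfolding dderiv_def by (simp add: frechet_derivative_at[symmetric])
qed

lemma smooth_power_of_linear_form:
  fixes n :: "real ^ 'd"
  shows "smooth (\<lambda>x. (n \<bullet> x) ^ k)"
proof -
  have "\<exists>c' m'. dderivs as (\<lambda>x. (n \<bullet> x) ^ k) = (\<lambda>x. c' * (n \<bullet> x) ^ m')" for as
  proof (induction as)
    case Nil
    show ?case by (intro exI[of _ 1] exI[of _ k]) simp
  next
    case (Cons a as)
    then obtain c' m' where "dderivs as (\<lambda>x. (n \<bullet> x) ^ k) = (\<lambda>x. c' * (n \<bullet> x) ^ m')" by blast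
    then show ?case
      by (intro exI[of _ "c' * of_nat m' * (n \<bullet> a)"] exI[of _ "m' - 1"])
        (simp add: dderiv_power_of_linear_form)
  qed
  moreover have "(\<lambda>x. c' * (n \<bullet> x) ^ m') differentiable (at x)" for c' m' x
    by (auto intro!: derivative_intros)
  ultimately show ?thesis unfolding smooth_def by (metis (no_types))
qed

lemma poly_sum_eq_zero_imp_coeff_zero:
  fixes c :: "nat \<Rightarrow> real"
  assumes "\<forall>t. (\<Sum>k<N. c k * t ^ k) = 0" "i < N"
  shows "c i = 0"
proof -
  define p where "p = (\<Sum>k<N. monom (c k) k)"
  have "poly p t = 0" for t using assms(1) by (simp add: p_def poly_sum poly_monom)
  then have "p = 0" using poly_all_0_iff_0 by blast
  moreover have "coeff p i = c i" using assms(2) by (simp add: p_def coeff_sum coeff_monom)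
  ultimately show ?thesis by simp
qed

lemma power_of_linear_form_in_Dsp:
  fixes X :: "(int ^ 'd) list"
  assumes T_sub: "T \<subseteq> Pow {..<length X}"
    and hits: "\<And>A. A \<in> T \<Longrightarrow> \<exists>i\<in>A. n \<bullet> to_real (X!i) = 0"
  shows "(\<lambda>x. (n \<bullet> x) ^ k) \<in> Dsp X T"
proof -
  have smooth: "smooth (\<lambda>x. (n \<bullet> x) ^ k)" by (rule smooth_power_of_linear_form)
  have "partial_set X A (\<lambda>x. (n \<bullet> x) ^ k) = (\<lambda>_. 0)" if A: "A \<in> T" for A
  proof -
    obtain i where i: "i \<in> A" "n \<bullet> to_real (X!i) = 0" using hits[OF A] by blast
    have "dderiv (to_real (X!i)) (\<lambda>x. (n \<bullet> x) ^ k) = (\<lambda>_. 0)"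
      using i(2) dderiv_power_of_linear_form[of _ 1 n k] by simp
    moreover have "finite A" using A T_sub by (auto intro: finite_subset)
    ultimately show ?thesis using partial_set_zero_if_dderiv_member_zero[OF smooth] i(1) by blast
  qed
  with smooth show ?thesis by (simp add: Dsp_def)
qed

lemma lin_indep_fun_powers_of_linear_form:
  fixes n :: "real ^ 'd"
  assumes "n \<noteq> 0"
  shows "lin_indep_fun (map (\<lambda>k x. (n \<bullet> x) ^ k) [0..<N])" (is "lin_indep_fun ?fs")
  unfolding lin_indep_fun_def
proof (intro allI impI)
  fix c :: "nat \<Rightarrow> real" and i
  assume zero: "\<forall>x. (\<Sum>j<length ?fs. c j * (?fs!j) x) = 0" and "i < length ?fs"
  \<comment> \<open>on the line through \<open>n\<close> the family restricts to the monomials \<open>t\<^sup>k\<close>\<close>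
  have "\<forall>t::real. (\<Sum>k<N. c k * t ^ k) = 0"
  proof
    fix t :: real
    have "n \<bullet> ((t / (n \<bullet> n)) *\<^sub>R n) = t" using assms by simp
    then show "(\<Sum>k<N. c k * t ^ k) = 0" using zero[rule_format, of "(t / (n \<bullet> n)) *\<^sub>R n"] by simp
  qed
  then show "c i = 0" using poly_sum_eq_zero_imp_coeff_zero \<open>i < length ?fs\<close> by simp
qed

lemma not_finite_rank_Dsp:
  fixes X :: "(int ^ 'd) list"
  assumes spans: "span (to_real ` set X) = UNIV"
    and T_sub: "T \<subseteq> Pow {..<length X}"
    and T_up: "\<forall>A\<in>T. \<forall>B. A \<subseteq> B \<and> B \<subseteq> {..<length X} \<longrightarrow> B \<in> T"
    and C: "C \<in> cocircuits X" "C \<notin> T"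
  shows "\<not> finite_rank (Dsp X T)"
proof (rule not_finite_rankI)
  fix N
  obtain n v where v: "n \<bullet> to_real v \<noteq> 0" and hits: "\<And>A. A \<in> T \<Longrightarrow> \<exists>i\<in>A. n \<bullet> to_real (X!i) = 0"
    using normal_of_missing_cocircuit[OF spans T_sub T_up C] by blast
  from v have "n \<noteq> 0" by auto
  let ?fs = "map (\<lambda>k x. (n \<bullet> x) ^ k) [0..<N]"
  have "set ?fs \<subseteq> Dsp X T" using power_of_linear_form_in_Dsp[OF T_sub hits] by auto
  with lin_indep_fun_powers_of_linear_form[OF \<open>n \<noteq> 0\<close>]
  show "\<exists>fs. set fs \<subseteq> Dsp X T \<and> lin_indep_fun fs \<and> length fs = N"
    by (intro exI[of _ ?fs]) simp
qed

theorem lemma2p4: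
  fixes X :: "(int ^ 'd) list" and T :: "nat set set"
  assumes nonzero: "\<forall>x\<in>set X. x \<noteq> 0"
    and spans: "span (to_real ` set X) = UNIV"
    and T_sub: "T \<subseteq> Pow {..<length X}"
    and T_up: "\<forall>A\<in>T. \<forall>B. A \<subseteq> B \<and> B \<subseteq> {..<length X} \<longrightarrow> B \<in> T"
  shows "(finite_rank (DM X T) \<longleftrightarrow> cocircuits X \<subseteq> T)
       \<and> (finite_rank (Dsp X T) \<longleftrightarrow> cocircuits X \<subseteq> T)"
proof -
  have "finite_rank (DM X T) \<Longrightarrow> cocircuits X \<subseteq> T" "finite_rank (Dsp X T) \<Longrightarrow> cocircuits X \<subseteq> T"
    using not_finite_rank_DM[OF spans T_sub T_up] not_finite_rank_Dsp[OF spans T_sub T_up] by blast+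
  moreover have "cocircuits X \<subseteq> T \<Longrightarrow> finite_rank (DM X T)" "cocircuits X \<subseteq> T \<Longrightarrow> finite_rank (Dsp X T)"
    using finite_rank_DM[OF spans T_up] finite_rank_Dsp[OF spans T_up] by blast+
  ultimately show ?thesis by blast
qed

end
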